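(* Let $k \ge 3$ be an integer and let $G=(V,E)$ be a graph. Let $G'=(V',E')$ be the star with $V'=\{a\}\cup V$ (where $a\notin V$ is a new vertex) and $E'=\{(a,v): v\in V\}$, and let $P=\{(u,v): (u,v)\in E\}$. Then $G$ admits a proper vertex coloring using $k$ colors if and only if the edges of $G'$ can be colored using $k$ colors such that for every pair $(u,v)\in P$ there is a geodesic rainbow path between $u$ and $v$ in $G'$.
   Context: Edge colorings are not required to be proper. A path in an edge-colored graph is a rainbow path if no two of its edges have the same color. A geodesic path between $u$ and $v$ is a shortest path between $u$ and $v$. *)

theory Defs
  imports Main
begin

definition simple_graph :: "'a set \<Rightarrow> 'a set set \<Rightarrow> bool" where
  "simple_graph V E \<longleftrightarrow> finite V \<and>
     (\<forall>e\<in>E. \<exists>u v. e = {u, v} \<and> u \<noteq> v \<and> u \<in> V \<and> v \<in> V)"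

fun path_edges :: "'a list \<Rightarrow> 'a set list" where
  "path_edges (x # y # xs) = {x, y} # path_edges (y # xs)"
| "path_edges _ = []"

definition is_path :: "'a set \<Rightarrow> 'a set set \<Rightarrow> 'a list \<Rightarrow> bool" where
  "is_path V E xs \<longleftrightarrow> xs \<noteq> [] \<and> distinct xs \<and> set xs \<subseteq> V \<and>
     set (path_edges xs) \<subseteq> E"

definition path_between :: "'a set \<Rightarrow> 'a set set \<Rightarrow> 'a \<Rightarrow> 'a \<Rightarrow> 'a list \<Rightarrow> bool" where
  "path_between V E u v xs \<longleftrightarrow> is_path V E xs \<and> hd xs = u \<and> last xs = v"

definition geodesic :: "'a set \<Rightarrow> 'a set set \<Rightarrow> 'a \<Rightarrow> 'a \<Rightarrow> 'a list \<Rightarrow> bool" where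
  "geodesic V E u v xs \<longleftrightarrow> path_between V E u v xs \<and>
     (\<forall>ys. path_between V E u v ys \<longrightarrow> length xs \<le> length ys)"

definition rainbow :: "('a set \<Rightarrow> 'c) \<Rightarrow> 'a list \<Rightarrow> bool" where
  "rainbow c xs \<longleftrightarrow> distinct (map c (path_edges xs))"

definition proper_vertex_coloring :: "'a set \<Rightarrow> 'a set set \<Rightarrow> nat \<Rightarrow> ('a \<Rightarrow> nat) \<Rightarrow> bool" where
  "proper_vertex_coloring V E k f \<longleftrightarrow> (\<forall>v\<in>V. f v < k) \<and>
     (\<forall>u v. {u, v} \<in> E \<longrightarrow> f u \<noteq> f v)"

definition edge_coloring :: "'a set set \<Rightarrow> nat \<Rightarrow> ('a set \<Rightarrow> nat) \<Rightarrow> bool" where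
  "edge_coloring E k c \<longleftrightarrow> (\<forall>e\<in>E. c e < k)"

end

theory Submission
  imports Defs
begin

text \<open>Every path of the star with centre \<open>a\<close> between two distinct leaves is the path
  \<open>[u, a, v]\<close> through the centre; so the unique geodesic joining the endpoints of an edge
  \<open>{u, v}\<close> of \<open>G\<close> is rainbow exactly when the star edges \<open>{a, u}\<close> and \<open>{a, v}\<close> have
  different colours. Hence edge colourings of the star with rainbow geodesics are the same
  thing as proper vertex colourings of \<open>G\<close>, via \<open>w \<mapsto> c {a, w}\<close>.\<close>

abbreviation star_edges :: "'a \<Rightarrow> 'a set \<Rightarrow> 'a set set" where
  "star_edges a V \<equiv> {{a, v} | v. v \<in> V}"

lemma star_edge_contains_centre: "{x, y} \<in> star_edges a V \<Longrightarrow> x = a \<or> y = a"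
  by (auto simp: doubleton_eq_iff)

lemma path_between_star_leaves:
  assumes "a \<notin> V" "u \<in> V" "v \<in> V" "u \<noteq> v"
    and "path_between (insert a V) (star_edges a V) u v ys"
  shows "ys = [u, a, v]"
proof -
  have ys: "distinct ys" "set (path_edges ys) \<subseteq> star_edges a V" "hd ys = u" "last ys = v"
    and "ys \<noteq> []"
    using assms(5) unfolding path_between_def is_path_def by auto
  obtain y rest where ys_eq: "ys = u # y # rest"
  proof (cases ys)
    case (Cons x r)
    then have "r \<noteq> []" using ys(3,4) \<open>u \<noteq> v\<close> by auto
    then obtain y rest where "r = y # rest" by (cases r) auto
    then show ?thesis using that Cons ys(3) by simp
  qed (use \<open>ys \<noteq> []\<close> in simp)
  have "{u, y} \<in> star_edges a V"
    using ys(2) ys_eq by simp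
  then have "y = a"
    using star_edge_contains_centre[of u y a V] assms(1,2) by auto
  then obtain z rest' where rest: "rest = z # rest'"
    using ys(4) ys_eq assms(1,3) by (cases rest) auto
  have "rest' = []"
  proof (rule ccontr)
    assume "rest' \<noteq> []"
    then obtain t rest'' where rest': "rest' = t # rest''" by (cases rest') auto
    then have "{z, t} \<in> star_edges a V"
      using ys(2) ys_eq rest by simp
    moreover have "z \<noteq> a" "t \<noteq> a"
      using ys(1) ys_eq rest rest' \<open>y = a\<close> by auto
    ultimately show False
      using star_edge_contains_centre[of z t a V] by simp
  qed
  then show ?thesis
    using ys(4) ys_eq rest \<open>y = a\<close> by simp
qed

lemma path_between_through_centre:
  assumes "u \<in> V" "v \<in> V" "u \<noteq> v" "u \<noteq> a" "v \<noteq> a"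
  shows "path_between (insert a V) (star_edges a V) u v [u, a, v]"
proof -
  have "{u, a} \<in> star_edges a V" "{a, v} \<in> star_edges a V"
    using assms(1,2) by (auto simp: insert_commute)
  then show ?thesis
    using assms unfolding path_between_def is_path_def by auto
qed

lemma geodesic_star_leaves_iff:
  assumes "a \<notin> V" "u \<in> V" "v \<in> V" "u \<noteq> v"
  shows "geodesic (insert a V) (star_edges a V) u v xs \<longleftrightarrow> xs = [u, a, v]"
proof -
  have "path_between (insert a V) (star_edges a V) u v [u, a, v]"
    using assms by (intro path_between_through_centre) auto
  then show ?thesis
    using path_between_star_leaves[OF assms] unfolding geodesic_def by blast
qed

lemma rainbow_through_centre_iff: "rainbow c [u, a, v] \<longleftrightarrow> c {a, u} \<noteq> c {a, v}"
  by (simp add: rainbow_def insert_commute)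

lemma simple_graph_edgeD:
  "simple_graph V E \<Longrightarrow> {u, v} \<in> E \<Longrightarrow> u \<in> V \<and> v \<in> V \<and> u \<noteq> v"
  unfolding simple_graph_def by (auto simp: doubleton_eq_iff)

lemma proper_vertex_coloring_cong:
  assumes "simple_graph V E" "\<And>v. v \<in> V \<Longrightarrow> f v = g v"
  shows "proper_vertex_coloring V E k f \<longleftrightarrow> proper_vertex_coloring V E k g"
proof -
  have "f u \<noteq> f v \<longleftrightarrow> g u \<noteq> g v" if "{u, v} \<in> E" for u v
    using simple_graph_edgeD[OF assms(1) that] assms(2) by simp
  then show ?thesis
    using assms(2) unfolding proper_vertex_coloring_def by auto
qed

lemma star_rainbow_geodesics_iff_proper:
  assumes "simple_graph V E" "a \<notin> V"
  shows "(edge_coloring (star_edges a V) k c \<and>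
      (\<forall>u v. (u, v) \<in> {(x, y). {x, y} \<in> E} \<longrightarrow>
         (\<exists>xs. geodesic (insert a V) (star_edges a V) u v xs \<and> rainbow c xs)))
    \<longleftrightarrow> proper_vertex_coloring V E k (\<lambda>w. c {a, w})"
proof -
  have "edge_coloring (star_edges a V) k c \<longleftrightarrow> (\<forall>w\<in>V. c {a, w} < k)"
    unfolding edge_coloring_def by blast
  moreover have "(\<exists>xs. geodesic (insert a V) (star_edges a V) u v xs \<and> rainbow c xs)
      \<longleftrightarrow> c {a, u} \<noteq> c {a, v}" if "{u, v} \<in> E" for u v
    using geodesic_star_leaves_iff[OF assms(2)] simple_graph_edgeD[OF assms(1) that]
    by (simp add: rainbow_through_centre_iff)
  ultimately show ?thesis
    unfolding proper_vertex_coloring_def by auto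
qed

lemma proper_vertex_coloring_iff_star:
  assumes "simple_graph V E" "a \<notin> V"
  shows "(\<exists>f. proper_vertex_coloring V E k f) \<longleftrightarrow>
    (\<exists>c. proper_vertex_coloring V E k (\<lambda>w. c {a, w}))"
proof
  assume "\<exists>f. proper_vertex_coloring V E k f"
  then obtain f where f: "proper_vertex_coloring V E k f" ..
  define c where "c e = f (THE w. w \<in> e - {a})" for e
  have "c {a, w} = f w" if "w \<in> V" for w
  proof -
    have "{a, w} - {a} = {w}" using that assms(2) by auto
    then show ?thesis unfolding c_def by simp
  qed
  then have "proper_vertex_coloring V E k (\<lambda>w. c {a, w})"
    using f proper_vertex_coloring_cong[OF assms(1), of "\<lambda>w. c {a, w}" f] by simp
  then show "\<exists>c. proper_vertex_coloring V E k (\<lambda>w. c {a, w})" by blast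
qed blast

theorem lemma1:
  fixes V :: "'a set" and E :: "'a set set" and a :: 'a and k :: nat
  assumes "k \<ge> 3"
    and "simple_graph V E"
    and "a \<notin> V"
  shows "(\<exists>f. proper_vertex_coloring V E k f) \<longleftrightarrow>
    (\<exists>c. edge_coloring {{a, v} | v. v \<in> V} k c \<and>
       (\<forall>u v. (u, v) \<in> {(x, y). {x, y} \<in> E} \<longrightarrow>
          (\<exists>xs. geodesic (insert a V) {{a, v} | v. v \<in> V} u v xs \<and> rainbow c xs)))"
  using proper_vertex_coloring_iff_star[OF assms(2,3)]
    star_rainbow_geodesics_iff_proper[OF assms(2,3)] by simp

end
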